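(* There is a semigroup which is not moving but in which the proper IP sets are partition regular (for every proper IP set $A$ and every partition of $A$ into finitely many pieces, some piece is a proper IP set).
   Context: Semigroups are written additively and are not assumed commutative. An infinite semigroup $S$ is moving if for each infinite $A\subseteq S$ and each finite $F\subseteq S$ there are $a_1,\dotsc,a_k\in A$ such that $\{a_1+s,\dotsc,a_k+s\}\not\subseteq F$ for all but finitely many $s\in S$. For a sequence $a_1,a_2,\dotsc$, $\mathrm{FS}(a_1,a_2,\dotsc):=\{a_{i_1}+\dotsb+a_{i_m}: m\ge1,\ i_1<\dotsb<i_m\}$; a proper IP set is a set containing $\mathrm{FS}(b_1,b_2,\dotsc)$ for some injective sequence $b_1,b_2,\dotsc$. *)

theory Defs
  imports Main "HOL-Library.Disjoint_Sets"
begin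

definition semigroup_on :: "'a set \<Rightarrow> ('a \<Rightarrow> 'a \<Rightarrow> 'a) \<Rightarrow> bool" where
  "semigroup_on S p \<longleftrightarrow> (\<forall>x\<in>S. \<forall>y\<in>S. p x y \<in> S) \<and>
     (\<forall>x\<in>S. \<forall>y\<in>S. \<forall>z\<in>S. p (p x y) z = p x (p y z))"

definition moving :: "'a set \<Rightarrow> ('a \<Rightarrow> 'a \<Rightarrow> 'a) \<Rightarrow> bool" where
  "moving S p \<longleftrightarrow> infinite S \<and>
     (\<forall>A F. A \<subseteq> S \<and> infinite A \<and> F \<subseteq> S \<and> finite F \<longrightarrow>
        (\<exists>as. set as \<subseteq> A \<and> finite {s\<in>S. (\<lambda>a. p a s) ` set as \<subseteq> F}))"

fun list_sum1 :: "('a \<Rightarrow> 'a \<Rightarrow> 'a) \<Rightarrow> 'a list \<Rightarrow> 'a" where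
  "list_sum1 p (x # xs) = foldl p x xs"

definition FS :: "('a \<Rightarrow> 'a \<Rightarrow> 'a) \<Rightarrow> (nat \<Rightarrow> 'a) \<Rightarrow> 'a set" where
  "FS p b = {list_sum1 p (map b (sorted_list_of_set I)) | I. finite I \<and> I \<noteq> {}}"

definition proper_IP :: "'a set \<Rightarrow> ('a \<Rightarrow> 'a \<Rightarrow> 'a) \<Rightarrow> 'a set \<Rightarrow> bool" where
  "proper_IP S p A \<longleftrightarrow> A \<subseteq> S \<and> (\<exists>b. (\<forall>n. b n \<in> S) \<and> inj b \<and> FS p b \<subseteq> A)"

definition proper_IP_partition_regular :: "'a set \<Rightarrow> ('a \<Rightarrow> 'a \<Rightarrow> 'a) \<Rightarrow> bool" where
  "proper_IP_partition_regular S p \<longleftrightarrow>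
     (\<forall>A P. proper_IP S p A \<and> finite P \<and> disjoint P \<and> \<Union>P = A \<longrightarrow>
        (\<exists>B\<in>P. proper_IP S p B))"

end

theory Submission
  imports Defs "HOL-Library.Infinite_Set"
begin

text \<open>Take a set with a distinguished element z whose other elements are sorted into finitely
  many classes, and let x + y be x when x and y are non-zero elements of the same class, and
  z otherwise. Every class is then a left-zero semigroup, so the finite sums of an injective
  sequence running inside one class are just its terms; since an injective sequence has an
  infinite subsequence inside one class and inside one cell of a finite partition, proper IP
  sets are partition regular. On the other hand, translating an infinite class by an element
  of another class sends everything to z, so with two infinite classes the semigroup is not
  moving (take F = {z}).\<close>

definition class_semigroup :: "('a \<Rightarrow> 'b) \<Rightarrow> 'a \<Rightarrow> 'a \<Rightarrow> 'a \<Rightarrow> 'a" where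
  "class_semigroup k z x y = (if x \<noteq> z \<and> y \<noteq> z \<and> k x = k y then x else z)"

lemma semigroup_on_class_semigroup: "semigroup_on UNIV (class_semigroup k z)"
  unfolding semigroup_on_def class_semigroup_def by auto

lemma foldl_left_zero:
  assumes "\<forall>y\<in>set xs. p x y = x"
  shows "foldl p x xs = x"
  using assms by (induction xs) auto

lemma FS_subset_range_if_left_zero:
  assumes "\<And>i j. p (b i) (b j) = b i"
  shows "FS p b \<subseteq> range b"
proof
  fix x assume "x \<in> FS p b"
  then obtain I where I: "finite I" "I \<noteq> {}"
    and x: "x = list_sum1 p (map b (sorted_list_of_set I))"
    unfolding FS_def by blast
  obtain i "is" where "sorted_list_of_set I = i # is"
    using I by (cases "sorted_list_of_set I") auto
  with x have "x = foldl p (b i) (map b is)" by simp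
  also have "\<dots> = b i" using assms by (intro foldl_left_zero) auto
  finally show "x \<in> range b" by simp
qed

lemma in_FS: "b n \<in> FS p b"
proof -
  have "b n = list_sum1 p (map b (sorted_list_of_set {n}))" by simp
  then show ?thesis unfolding FS_def by blast
qed

lemma proper_IP_if_left_zero_on_infinite:
  fixes L :: "nat set"
  assumes "infinite L" "inj_on b L" "b ` L \<subseteq> B"
    and left_zero: "\<And>i j. i \<in> L \<Longrightarrow> j \<in> L \<Longrightarrow> p (b i) (b j) = b i"
  shows "proper_IP UNIV p B"
proof -
  define c where "c = b \<circ> enumerate L"
  have in_L: "enumerate L n \<in> L" for n using assms(1) by (rule enumerate_in_set)
  have "inj (enumerate L)"
    using strict_mono_enumerate[OF assms(1)] by (rule strict_mono_imp_inj_on)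
  then have "inj c"
    unfolding c_def using assms(2) in_L by (auto simp: inj_def inj_on_def)
  moreover have "FS p c \<subseteq> range c"
    by (rule FS_subset_range_if_left_zero) (simp add: c_def left_zero in_L)
  moreover have "range c \<subseteq> B" using assms(3) in_L by (auto simp: c_def)
  ultimately show ?thesis unfolding proper_IP_def by blast
qed

lemma inj_seq_infinite_in_one_class:
  fixes b :: "nat \<Rightarrow> 'a"
  assumes "inj b" "finite (range k)"
  obtains K where "infinite K" "\<And>i j. i \<in> K \<Longrightarrow> j \<in> K \<Longrightarrow> b i \<noteq> z \<and> k (b i) = k (b j)"
proof -
  have "{n. b n = z} \<subseteq> {inv b z}" using assms(1) by auto
  then have "finite {n. b n = z}" by (rule finite_subset) simp
  then have "infinite {n. b n \<noteq> z}" by simp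
  moreover have "finite ((k \<circ> b) ` {n. b n \<noteq> z})"
    using assms(2) by (rule finite_subset[rotated]) auto
  ultimately obtain n0 where "infinite {n \<in> {n. b n \<noteq> z}. (k \<circ> b) n = (k \<circ> b) n0}"
    using pigeonhole_infinite by blast
  then show ?thesis by (intro that) auto
qed

lemma partition_regular_class_semigroup:
  assumes "finite (range k)"
  shows "proper_IP_partition_regular UNIV (class_semigroup k z)"
  unfolding proper_IP_partition_regular_def
proof (intro allI impI) \<comment> \<open>the cells need not be disjoint\<close>
  fix A P assume "proper_IP UNIV (class_semigroup k z) A \<and> finite P \<and> disjoint P \<and> \<Union>P = A"
  then obtain b where b: "inj b" "FS (class_semigroup k z) b \<subseteq> \<Union>P" and "finite P"
    unfolding proper_IP_def by blast
  obtain K where K: "infinite K" "\<And>i j. i \<in> K \<Longrightarrow> j \<in> K \<Longrightarrow> b i \<noteq> z \<and> k (b i) = k (b j)"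
    using inj_seq_infinite_in_one_class[OF b(1) assms] by blast
  have "b n \<in> \<Union>P" for n using b(2) in_FS[of b n] by (rule subsetD)
  then have cover: "K \<subseteq> (\<Union>B\<in>P. {n\<in>K. b n \<in> B})" by blast
  have "\<exists>B\<in>P. infinite {n\<in>K. b n \<in> B}"
  proof (rule ccontr)
    assume "\<not> (\<exists>B\<in>P. infinite {n\<in>K. b n \<in> B})"
    then have "finite (\<Union>B\<in>P. {n\<in>K. b n \<in> B})" using \<open>finite P\<close> by simp
    with cover K(1) show False using finite_subset by blast
  qed
  then obtain B where B: "B \<in> P" "infinite {n\<in>K. b n \<in> B}" by blast
  have "proper_IP UNIV (class_semigroup k z) B"
  proof (rule proper_IP_if_left_zero_on_infinite[OF B(2)])
    show "inj_on b {n\<in>K. b n \<in> B}" using b(1) by (rule inj_on_subset) simp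
    show "b ` {n\<in>K. b n \<in> B} \<subseteq> B" by blast
    fix i j assume "i \<in> {n\<in>K. b n \<in> B}" "j \<in> {n\<in>K. b n \<in> B}"
    then have "b i \<noteq> z" "b j \<noteq> z" "k (b i) = k (b j)" using K(2) by auto
    then show "class_semigroup k z (b i) (b j) = b i" by (simp add: class_semigroup_def)
  qed
  with B(1) show "\<exists>B\<in>P. proper_IP UNIV (class_semigroup k z) B" by blast
qed

lemma not_moving_class_semigroup:
  assumes "infinite {x. x \<noteq> z \<and> k x = u}" "infinite {s. s \<noteq> z \<and> k s \<noteq> u}"
  shows "\<not> moving UNIV (class_semigroup k z)"
proof
  assume "moving UNIV (class_semigroup k z)"
  then have "\<exists>as. set as \<subseteq> {x. x \<noteq> z \<and> k x = u}
      \<and> finite {s \<in> UNIV. (\<lambda>a. class_semigroup k z a s) ` set as \<subseteq> {z}}"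
    using assms(1) unfolding moving_def by simp
  then obtain as where as: "set as \<subseteq> {x. x \<noteq> z \<and> k x = u}"
    and fin: "finite {s. (\<lambda>a. class_semigroup k z a s) ` set as \<subseteq> {z}}" by auto
  have "{s. s \<noteq> z \<and> k s \<noteq> u} \<subseteq> {s. (\<lambda>a. class_semigroup k z a s) ` set as \<subseteq> {z}}"
    using as by (auto simp: class_semigroup_def)
  with fin assms(2) show False using finite_subset by blast
qed

lemma infinite_sets_containing: "infinite {A :: nat set. A \<noteq> {} \<and> (0 \<in> A) = u}"
proof -
  define f where "f n = insert (Suc n) (if u then {0} else {})" for n :: nat
  have "inj f"
  proof (rule injI)
    fix m n assume "f m = f n"
    moreover have "Suc m \<in> f m" by (simp add: f_def)
    ultimately have "Suc m \<in> f n" by simp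
    then show "m = n" by (simp add: f_def split: if_splits)
  qed
  then have "infinite (range f)" by (rule range_inj_infinite)
  then show ?thesis by (rule infinite_super[rotated]) (auto simp: f_def)
qed

theorem corollary4p1:
  shows "\<exists>(S :: nat set set) p. semigroup_on S p \<and> infinite S \<and> \<not> moving S p
           \<and> proper_IP_partition_regular S p"
proof (intro exI conjI)
  let ?k = "\<lambda>A :: nat set. 0 \<in> A"
  show "semigroup_on UNIV (class_semigroup ?k {})" by (rule semigroup_on_class_semigroup)
  show "infinite (UNIV :: nat set set)"
    using infinite_sets_containing[of True] by (rule infinite_super[rotated]) simp
  show "\<not> moving UNIV (class_semigroup ?k {})"
    using infinite_sets_containing[of True] infinite_sets_containing[of False]
    by (intro not_moving_class_semigroup[where u = True]) simp_all
  show "proper_IP_partition_regular UNIV (class_semigroup ?k {})"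
    by (rule partition_regular_class_semigroup) simp
qed

end
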